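(* Let $M\in\mathbb{N}$ be divisible neither by $2^4$ nor by the square of any odd prime, let $k$ be a positive integer, and suppose $d=\dim S_k^{\rm new}(\Gamma_0(M))\ge2$. Let $\varphi_1,\ldots,\varphi_d$ be the normalized newforms forming a basis of $S_k^{\rm new}(\Gamma_0(M))$, with Fourier coefficients $a_i(n)$, and for primes $p\nmid M$ define $\theta_i(p)\in[0,\tfrac12]$ by $a_i(p)=2p^{\frac{k-1}{2}}\cos(2\pi\theta_i(p))$. Let $p\nmid M$ be a prime such that for every pair of indices $i\ne j$ the numbers $1,\theta_i(p),\theta_j(p)$ are linearly independent over $\mathbb{Q}$. Then for any index $i_1\in\{1,\ldots,d\}$ there exist distinct non-zero integers $n_1,\ldots,n_d$ such that (1) $n_{i_1}\nmid n_i$ for all $i\ne i_1$; (2) for every $t\in\mathbb{R}$ and every $\varepsilon>0$ there exists $n\in\mathbb{N}$ such that $\min\{|n\theta_i(p)-n_it-m|:m\in\mathbb{Z}\}<\varepsilon$ for all $i=1,\ldots,d$.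
   Context: $S_k^{\rm new}(\Gamma_0(M))$ is the new subspace of weight-$k$ holomorphic cusp forms for $\Gamma_0(M)$ with trivial character; normalized newforms have real coefficients with $|a_i(p)|\le 2p^{(k-1)/2}$. The assumption $d\ge 2$ is a standing assumption of the section of the paper containing this lemma. *)

theory Defs
  imports Complex_Main "HOL-Computational_Algebra.Primes"
begin

definition lin_indep_Q_1 :: "real \<Rightarrow> real \<Rightarrow> bool" where
  "lin_indep_Q_1 x y \<longleftrightarrow>
     (\<forall>q0 q1 q2 :: rat. of_rat q0 + of_rat q1 * x + of_rat q2 * y = 0
        \<longrightarrow> q0 = 0 \<and> q1 = 0 \<and> q2 = 0)"

definition dist_Z :: "real \<Rightarrow> real" where
  "dist_Z x = (INF m::int. \<bar>x - of_int m\<bar>)"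

end

theory Submission
  imports Defs "HOL-Analysis.Kronecker_Approximation_Theorem"
begin

(* Take a maximal set B of indices containing i1 such that 1 and the \<theta> b (b \<in> B) are linearly
   independent over the integers. Then there is one P > 0 with
   P \<theta> i = c0 i + \<Sum>b\<in>B. c i b \<theta> b for every i, where c i1 is P times the unit vector at i1.
   By Kronecker's theorem the multiples m \<theta> b (b \<in> B) approximate any point (x b t) modulo 1,
   so the multiples of P approximate (n i t) with n i = \<Sum>b\<in>B. c i b x b.
   Pairwise independence of 1, \<theta> i, \<theta> j makes the rows c i pairwise distinct and, for i \<noteq> i1,
   not concentrated on i1. Choosing the x b (b \<noteq> i1) off finitely many hyperplanes and
   x i1 = q large then makes the n i non-zero, distinct and not divisible by n i1 = P q. *)

section \<open>Integer linear independence\<close>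

lemma lin_indep_Q_1_int:
  assumes "lin_indep_Q_1 x y" "of_int a + of_int b * x + of_int c * y = 0"
  shows "a = 0 \<and> b = 0 \<and> c = 0"
  using assms(1)[unfolded lin_indep_Q_1_def, rule_format, of "of_int a" "of_int b" "of_int c"] assms(2)
  by simp

definition lin_indep_Z_1 :: "('a \<Rightarrow> real) \<Rightarrow> 'a set \<Rightarrow> bool" where
  "lin_indep_Z_1 \<theta> B \<longleftrightarrow> (\<forall>(q0::int) (q::'a \<Rightarrow> int).
      of_int q0 + (\<Sum>b\<in>B. of_int (q b) * \<theta> b) = 0 \<longrightarrow> q0 = 0 \<and> (\<forall>b\<in>B. q b = 0))"

lemma lin_indep_Z_1D:
  assumes "lin_indep_Z_1 \<theta> B" "of_int q0 + (\<Sum>b\<in>B. of_int (q b) * \<theta> b) = 0"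
  shows "q0 = 0" "b \<in> B \<Longrightarrow> q b = 0"
  using assms unfolding lin_indep_Z_1_def by blast+

lemma lin_indep_Z_1_ne_1:
  assumes "lin_indep_Z_1 \<theta> B" "finite B" "b \<in> B"
  shows "\<theta> b \<noteq> 1"
proof
  assume "\<theta> b = 1"
  then have "of_int (-1) + (\<Sum>c\<in>B. of_int (of_bool (c = b)) * \<theta> c) = 0"
    using assms(2,3) by simp
  then show False using lin_indep_Z_1D(1)[OF assms(1)] by fastforce
qed

lemma lin_indep_Z_1_inj:
  assumes "lin_indep_Z_1 \<theta> B" "finite B"
  shows "inj_on \<theta> B"
proof (rule inj_onI, rule ccontr)
  fix b c assume bc: "b \<in> B" "c \<in> B" "\<theta> b = \<theta> c" "b \<noteq> c"
  then have "of_int 0 + (\<Sum>x\<in>B. of_int (of_bool (x = b) - of_bool (x = c)) * \<theta> x) = 0"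
    using assms(2) by (simp add: left_diff_distrib sum_subtractf)
  from lin_indep_Z_1D(2)[OF assms(1) this bc(1)] show False using bc by simp
qed

lemma lin_indep_Z_1_singleton:
  assumes "lin_indep_Q_1 (\<theta> i) y"
  shows "lin_indep_Z_1 \<theta> {i}"
  unfolding lin_indep_Z_1_def
  using lin_indep_Q_1_int[OF assms, of _ _ 0] by simp

lemma lin_indep_Z_1_coeffs_of_member:
  assumes indep: "lin_indep_Z_1 \<theta> B" and "finite B" "i \<in> B"
    and rel: "of_int P * \<theta> i = of_int c0 + (\<Sum>b\<in>B. of_int (c b) * \<theta> b)"
  shows "c0 = 0" "\<And>b. b \<in> B \<Longrightarrow> c b = P * of_bool (b = i)"
proof -
  have "(\<Sum>b\<in>B. of_int (c b - P * of_bool (b = i)) * \<theta> b) = (\<Sum>b\<in>B. of_int (c b) * \<theta> b) - of_int P * \<theta> i"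
    using assms(2,3) by (simp add: left_diff_distrib sum_subtractf mult.assoc flip: sum_distrib_left)
  then have "of_int c0 + (\<Sum>b\<in>B. of_int (c b - P * of_bool (b = i)) * \<theta> b) = 0"
    using rel by simp
  from lin_indep_Z_1D[OF indep this] show "c0 = 0" "\<And>b. b \<in> B \<Longrightarrow> c b = P * of_bool (b = i)"
    by simp_all
qed

section \<open>Kronecker and Dirichlet approximation on finite index sets\<close>

lemma Kronecker_lin_indep_Z_1:
  fixes \<theta> \<alpha> :: "'a \<Rightarrow> real"
  assumes B: "finite B" and indep: "lin_indep_Z_1 \<theta> B" and "\<epsilon> > 0"
  obtains k :: int where "\<And>b. b \<in> B \<Longrightarrow> \<exists>z::int. \<bar>of_int k * \<theta> b - of_int z - \<alpha> b\<bar> < \<epsilon>"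
proof -
  interpret Modules.module "\<lambda>r. (*) (real_of_int r)"
    by (simp add: Modules.module.intro distrib_left mult.commute)
  define n where "n = card B"
  obtain e where e: "bij_betw e {..<n} B"
    using ex_bij_betw_nat_finite[OF B] by (auto simp: n_def atLeast0LessThan)
  \<comment> \<open>Kronecker_thm_2 expects the family indexed by {..n} with the constant 1 in the last place.\<close>
  define \<eta> where "\<eta> j = (if j < n then \<theta> (e j) else 1)" for j
  have \<eta>_lt: "\<eta> j = \<theta> (e j)" if "j < n" for j
    using that by (simp add: \<eta>_def)
  have "inj_on (\<theta> \<circ> e) {..<n}"
    using e lin_indep_Z_1_inj[OF indep B] by (simp add: bij_betw_def comp_inj_on)
  moreover have "\<theta> (e j) \<noteq> 1" if "j < n" for j
    using lin_indep_Z_1_ne_1[OF indep B] bij_betwE[OF e] that by blast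
  ultimately have inj: "inj_on \<eta> {..n}"
    by (auto simp: inj_on_def \<eta>_def)
  have "u v = 0" if u: "(\<Sum>v\<in>\<eta> ` {..n}. of_int (u v) * v) = 0" and v: "v \<in> \<eta> ` {..n}" for u v
  proof -
    have "(\<Sum>v\<in>\<eta> ` {..n}. of_int (u v) * v) = (\<Sum>j\<le>n. of_int (u (\<eta> j)) * \<eta> j)"
      using inj by (simp add: sum.reindex)
    also have "\<dots> = of_int (u 1) + (\<Sum>j<n. of_int (u (\<theta> (e j))) * \<theta> (e j))"
      by (simp add: lessThan_Suc_atMost[symmetric] \<eta>_def)
    also have "\<dots> = of_int (u 1) + (\<Sum>b\<in>B. of_int (u (\<theta> b)) * \<theta> b)"
      using sum.reindex_bij_betw[OF e, of "\<lambda>b. of_int (u (\<theta> b)) * \<theta> b"] by simp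
    finally have "of_int (u 1) + (\<Sum>b\<in>B. of_int (u (\<theta> b)) * \<theta> b) = 0"
      using u by simp
    from lin_indep_Z_1D[OF indep this] have "u 1 = 0" "\<And>b. b \<in> B \<Longrightarrow> u (\<theta> b) = 0"
      by simp_all
    then show "u v = 0"
      using v bij_betwE[OF e] by (auto simp: \<eta>_def)
  qed
  then have "independent (\<eta> ` {..n})"
    by (subst dependent_finite) auto
  then obtain k m where km: "\<And>j. j < n \<Longrightarrow> \<bar>of_int k * \<eta> j - of_int (m j) - (\<alpha> \<circ> e) j\<bar> < \<epsilon>"
    using Kronecker_thm_2[of \<eta> n \<epsilon> "\<alpha> \<circ> e"] inj \<open>\<epsilon> > 0\<close> by (auto simp: \<eta>_def)
  show thesis
  proof (rule that)
    fix b assume "b \<in> B"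
    then obtain j where "j < n" "b = e j"
      using bij_betw_imp_surj_on[OF e] by blast
    then show "\<exists>z::int. \<bar>of_int k * \<theta> b - of_int z - \<alpha> b\<bar> < \<epsilon>"
      using km[of j] \<eta>_lt[of j] by (intro exI[of _ "m j"]) simp
  qed
qed

lemma Dirichlet_approx_simult_finite:
  fixes \<theta> :: "'a \<Rightarrow> real"
  assumes B: "finite B" and "\<eta> > 0"
  obtains q :: int where "q > 0" "\<And>b. b \<in> B \<Longrightarrow> \<exists>z::int. \<bar>of_int q * \<theta> b - of_int z\<bar> < \<eta>"
proof -
  obtain N :: nat where N: "N > 0" "1 / N < \<eta>"
    using reals_Archimedean[OF \<open>\<eta> > 0\<close>] by (metis inverse_eq_divide zero_less_Suc)
  obtain e where e: "bij_betw e {..<card B} B"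
    using ex_bij_betw_nat_finite[OF B] by (auto simp: atLeast0LessThan)
  obtain q p where q: "q > 0" "\<And>j. j < card B \<Longrightarrow> \<bar>of_int q * (\<theta> \<circ> e) j - of_int (p j)\<bar> < 1 / N"
    by (rule Dirichlet_approx_simult[OF N(1), where \<theta>="\<theta> \<circ> e" and n="card B"]) blast
  show thesis
  proof (rule that[OF q(1)])
    fix b assume "b \<in> B"
    then obtain j where "j < card B" "b = e j"
      using bij_betw_imp_surj_on[OF e] by blast
    then show "\<exists>z::int. \<bar>of_int q * \<theta> b - of_int z\<bar> < \<eta>"
      using q(2)[of j] N(2) by (intro exI[of _ "p j"]) auto
  qed
qed

lemma Kronecker_lin_indep_Z_1_pos:
  fixes \<theta> \<alpha> :: "'a \<Rightarrow> real"
  assumes B: "finite B" and indep: "lin_indep_Z_1 \<theta> B" and "\<epsilon> > 0"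
  obtains m :: nat where "m \<ge> 1" "\<And>b. b \<in> B \<Longrightarrow> \<exists>z::int. \<bar>real m * \<theta> b - of_int z - \<alpha> b\<bar> < \<epsilon>"
proof -
  obtain k where k: "\<And>b. b \<in> B \<Longrightarrow> \<exists>z::int. \<bar>of_int k * \<theta> b - of_int z - \<alpha> b\<bar> < \<epsilon> / 2"
    using Kronecker_lin_indep_Z_1[OF B indep, of "\<epsilon> / 2"] \<open>\<epsilon> > 0\<close> by auto
  define j where "j = \<bar>k\<bar> + 1"
  have "j > 0" by (simp add: j_def)
  then obtain q where q: "q > 0" "\<And>b. b \<in> B \<Longrightarrow> \<exists>z::int. \<bar>of_int q * \<theta> b - of_int z\<bar> < \<epsilon> / (2 * j)"
    using Dirichlet_approx_simult_finite[OF B, of "\<epsilon> / (2 * j)"] \<open>\<epsilon> > 0\<close> by auto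
  \<comment> \<open>Adding j times the almost-period q makes k positive and costs at most \<epsilon>/2.\<close>
  define m where "m = k + j * q"
  have "j * q \<ge> j * 1"
    using q(1) \<open>j > 0\<close> by (intro mult_left_mono) auto
  then have "m \<ge> 1"
    unfolding m_def using j_def abs_ge_minus_self[of k] by linarith
  show thesis
  proof (rule that[of "nat m"])
    show "nat m \<ge> 1" using \<open>m \<ge> 1\<close> by simp
    fix b assume "b \<in> B"
    then obtain z1 z2 :: int where z1: "\<bar>of_int k * \<theta> b - of_int z1 - \<alpha> b\<bar> < \<epsilon> / 2"
      and z2: "\<bar>of_int q * \<theta> b - of_int z2\<bar> < \<epsilon> / (2 * j)"
      using k q(2) by blast
    have "\<bar>of_int j * (of_int q * \<theta> b - of_int z2)\<bar> = of_int j * \<bar>of_int q * \<theta> b - of_int z2\<bar>"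
      using \<open>j > 0\<close> by (simp add: abs_mult)
    also have "\<dots> < of_int j * (\<epsilon> / (2 * j))"
      using z2 \<open>j > 0\<close> by (intro mult_strict_left_mono) auto
    also have "\<dots> = \<epsilon> / 2" using \<open>j > 0\<close> by simp
    finally have "\<bar>of_int j * (of_int q * \<theta> b - of_int z2)\<bar> < \<epsilon> / 2" .
    moreover have "real (nat m) * \<theta> b - of_int (z1 + j * z2) - \<alpha> b
        = (of_int k * \<theta> b - of_int z1 - \<alpha> b) + of_int j * (of_int q * \<theta> b - of_int z2)"
      using \<open>m \<ge> 1\<close> by (simp add: m_def algebra_simps)
    ultimately show "\<exists>z::int. \<bar>real (nat m) * \<theta> b - of_int z - \<alpha> b\<bar> < \<epsilon>"
      using z1 by (intro exI[of _ "z1 + j * z2"]) linarith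
  qed
qed

section \<open>Rational relations over a maximal independent set\<close>

definition in_Q_span_1 :: "('a \<Rightarrow> real) \<Rightarrow> 'a set \<Rightarrow> real \<Rightarrow> bool" where
  "in_Q_span_1 \<theta> B x \<longleftrightarrow>
     (\<exists>(D::int) (c0::int) (c::'a \<Rightarrow> int). D \<noteq> 0 \<and> of_int D * x = of_int c0 + (\<Sum>b\<in>B. of_int (c b) * \<theta> b))"

lemma in_Q_span_1_self:
  assumes "finite B" "b \<in> B"
  shows "in_Q_span_1 \<theta> B (\<theta> b)"
  unfolding in_Q_span_1_def
  by (rule exI[of _ 1], rule exI[of _ 0], rule exI[of _ "\<lambda>x. of_bool (x = b)"]) (use assms in simp)

lemma in_Q_span_1_if_dependent_insert:
  assumes "finite B" "i \<notin> B" and indep: "lin_indep_Z_1 \<theta> B"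
    and dep: "\<not> lin_indep_Z_1 \<theta> (insert i B)"
  shows "in_Q_span_1 \<theta> B (\<theta> i)"
proof -
  obtain q0 q where rel: "of_int q0 + (\<Sum>b\<in>insert i B. of_int (q b) * \<theta> b) = 0"
    and nontrivial: "q0 \<noteq> 0 \<or> (\<exists>b\<in>insert i B. q b \<noteq> 0)"
    using dep unfolding lin_indep_Z_1_def by blast
  have rel': "of_int (q i) * \<theta> i + (of_int q0 + (\<Sum>b\<in>B. of_int (q b) * \<theta> b)) = 0"
    using rel assms(1,2) by (simp add: algebra_simps)
  have "q i \<noteq> 0"
  proof
    assume "q i = 0"
    with rel' have "of_int q0 + (\<Sum>b\<in>B. of_int (q b) * \<theta> b) = 0" by simp
    from lin_indep_Z_1D[OF indep this] nontrivial \<open>q i = 0\<close> show False by auto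
  qed
  moreover have "of_int (q i) * \<theta> i = of_int (- q0) + (\<Sum>b\<in>B. of_int (- q b) * \<theta> b)"
    using rel' by (simp add: sum_negf add_eq_0_iff)
  ultimately show ?thesis
    unfolding in_Q_span_1_def by (intro exI[of _ "q i"] exI[of _ "- q0"] exI[of _ "\<lambda>b. - q b"] conjI)
qed

lemma exists_maximal_lin_indep_Z_1:
  assumes I: "finite I" and "B0 \<subseteq> I" "lin_indep_Z_1 \<theta> B0"
  obtains B where "B0 \<subseteq> B" "B \<subseteq> I" "lin_indep_Z_1 \<theta> B" "\<And>i. i \<in> I \<Longrightarrow> in_Q_span_1 \<theta> B (\<theta> i)"
proof -
  define admissible where "admissible B \<longleftrightarrow> B0 \<subseteq> B \<and> B \<subseteq> I \<and> lin_indep_Z_1 \<theta> B" for B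
  have "admissible B0" using assms by (simp add: admissible_def)
  moreover have "\<forall>B. admissible B \<longrightarrow> card B < Suc (card I)"
    using card_mono[OF I] by (simp add: admissible_def less_Suc_eq_le)
  ultimately obtain B where B: "admissible B" and max: "\<And>B'. admissible B' \<Longrightarrow> card B' \<le> card B"
    using Lattices_Big.ex_has_greatest_nat[of admissible B0 card "Suc (card I)"] by auto
  then have "finite B" using I by (meson admissible_def finite_subset)
  have span: "in_Q_span_1 \<theta> B (\<theta> i)" if "i \<in> I" for i
  proof (cases "i \<in> B")
    case True
    then show ?thesis by (rule in_Q_span_1_self[OF \<open>finite B\<close>])
  next
    case False
    have "\<not> lin_indep_Z_1 \<theta> (insert i B)"
    proof
      assume "lin_indep_Z_1 \<theta> (insert i B)"
      then have "admissible (insert i B)"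
        using B \<open>i \<in> I\<close> by (auto simp: admissible_def)
      then have "card (insert i B) \<le> card B"
        by (rule max)
      then show False using False \<open>finite B\<close> by simp
    qed
    then show ?thesis
      using in_Q_span_1_if_dependent_insert[OF \<open>finite B\<close> False] B by (simp add: admissible_def)
  qed
  show thesis
    using B span by (intro that[of B]) (auto simp: admissible_def)
qed

lemma in_Q_span_1_common_denominator:
  fixes f :: "'i \<Rightarrow> real" and \<theta> :: "'a \<Rightarrow> real"
  assumes I: "finite I" and span: "\<And>i. i \<in> I \<Longrightarrow> in_Q_span_1 \<theta> B (f i)"
  obtains P :: int and c0 :: "'i \<Rightarrow> int" and c :: "'i \<Rightarrow> 'a \<Rightarrow> int"
  where "P > 0" "\<And>i. i \<in> I \<Longrightarrow> of_int P * f i = of_int (c0 i) + (\<Sum>b\<in>B. of_int (c i b) * \<theta> b)"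
proof -
  obtain D d0 d where D: "\<And>i. i \<in> I \<Longrightarrow> D i \<noteq> 0"
    and rel: "\<And>i. i \<in> I \<Longrightarrow> of_int (D i) * f i = of_int (d0 i) + (\<Sum>b\<in>B. of_int (d i b) * \<theta> b)"
    using span unfolding in_Q_span_1_def by metis
  define P where "P = (\<Prod>i\<in>I. \<bar>D i\<bar>)"
  have "P > 0" unfolding P_def using D by (intro prod_pos) auto
  have PD: "P = (P div D i) * D i" if "i \<in> I" for i
  proof -
    have "\<bar>D i\<bar> dvd P" unfolding P_def using I that by (intro dvd_prodI)
    then show ?thesis by simp
  qed
  show thesis
  proof (rule that[OF \<open>P > 0\<close>, of "\<lambda>i. (P div D i) * d0 i" "\<lambda>i b. (P div D i) * d i b"])
    fix i assume "i \<in> I"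
    have "of_int P * f i = of_int (P div D i) * (of_int (D i) * f i)"
      by (subst PD[OF \<open>i \<in> I\<close>]) simp
    also have "\<dots> = of_int (P div D i * d0 i) + (\<Sum>b\<in>B. of_int (P div D i * d i b) * \<theta> b)"
      by (simp add: rel[OF \<open>i \<in> I\<close>] distrib_left sum_distrib_left mult.assoc)
    finally show "of_int P * f i = of_int (P div D i * d0 i) + (\<Sum>b\<in>B. of_int (P div D i * d i b) * \<theta> b)" .
  qed
qed

lemma lin_indep_Q_1_relation_coeff_nonzero:
  assumes indep: "lin_indep_Q_1 x (\<theta> b1)" and "finite B" "b1 \<in> B" "P \<noteq> 0"
    and rel: "of_int P * x = of_int c0 + (\<Sum>b\<in>B. of_int (c b) * \<theta> b)"
  shows "\<exists>b\<in>B - {b1}. c b \<noteq> 0"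
proof (rule ccontr)
  assume "\<not> ?thesis"
  then have "(\<Sum>b\<in>B. of_int (c b) * \<theta> b) = of_int (c b1) * \<theta> b1"
    using assms(2,3) by (simp add: sum.remove)
  then have "of_int (- c0) + of_int P * x + of_int (- c b1) * \<theta> b1 = 0"
    using rel by simp
  then show False using lin_indep_Q_1_int[OF indep] \<open>P \<noteq> 0\<close> by blast
qed

lemma lin_indep_Q_1_relation_coeffs_differ:
  assumes indep: "lin_indep_Q_1 x y" and "P \<noteq> 0"
    and rel_x: "of_int P * x = of_int c0 + (\<Sum>b\<in>B. of_int (c b) * \<theta> b)"
    and rel_y: "of_int P * y = of_int d0 + (\<Sum>b\<in>B. of_int (d b) * \<theta> b)"
  shows "\<exists>b\<in>B. c b \<noteq> d b"
proof (rule ccontr)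
  assume "\<not> ?thesis"
  then have "(\<Sum>b\<in>B. of_int (c b) * \<theta> b) = (\<Sum>b\<in>B. of_int (d b) * \<theta> b)"
    by (intro sum.cong) auto
  then have "of_int (d0 - c0) + of_int P * x + of_int (- P) * y = 0"
    using rel_x rel_y by simp
  then show False using lin_indep_Q_1_int[OF indep] \<open>P \<noteq> 0\<close> by blast
qed

section \<open>Choosing the integer combinations\<close>

lemma int_point_outside_hyperplanes:
  fixes F :: "('a \<Rightarrow> int) set"
  assumes "finite S" "finite F" "\<And>f. f \<in> F \<Longrightarrow> \<exists>b\<in>S. f b \<noteq> 0"
  shows "\<exists>y. \<forall>f\<in>F. (\<Sum>b\<in>S. f b * y b) \<noteq> 0"
  using assms
proof (induction S arbitrary: F rule: finite_induct)
  case empty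
  then show ?case by auto
next
  case (insert a S)
  define F' where "F' = {f \<in> F. \<exists>b\<in>S. f b \<noteq> 0}"
  have "finite F'" "\<And>f. f \<in> F' \<Longrightarrow> \<exists>b\<in>S. f b \<noteq> 0"
    using insert.prems(1) by (auto simp: F'_def)
  then obtain y where y: "\<forall>f\<in>F'. (\<Sum>b\<in>S. f b * y b) \<noteq> 0"
    using insert.IH by blast
  \<comment> \<open>The new coordinate outweighs every old partial sum.\<close>
  define v where "v = 1 + (\<Sum>f\<in>F. \<bar>\<Sum>b\<in>S. f b * y b\<bar>)"
  have "(\<Sum>b\<in>insert a S. f b * (y(a := v)) b) \<noteq> 0" if "f \<in> F" for f
  proof -
    have "(\<Sum>b\<in>S. f b * (y(a := v)) b) = (\<Sum>b\<in>S. f b * y b)"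
      using insert.hyps(2) by (intro sum.cong) auto
    then have split: "(\<Sum>b\<in>insert a S. f b * (y(a := v)) b) = f a * v + (\<Sum>b\<in>S. f b * y b)"
      using insert.hyps by simp
    have "\<bar>\<Sum>b\<in>S. f b * y b\<bar> \<le> (\<Sum>f\<in>F. \<bar>\<Sum>b\<in>S. f b * y b\<bar>)"
      using that insert.prems(1) by (intro member_le_sum) auto
    then have small: "\<bar>\<Sum>b\<in>S. f b * y b\<bar> < v" by (simp add: v_def)
    show ?thesis
    proof (cases "f a = 0")
      case True
      then have "f \<in> F'" using that insert.prems(2) by (auto simp: F'_def)
      then show ?thesis using split True y by simp
    next
      case False
      then have "1 \<le> \<bar>f a\<bar>" by arith
      moreover have "v > 0" using small abs_ge_zero[of "\<Sum>b\<in>S. f b * y b"] by linarith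
      ultimately have "\<bar>f a * v\<bar> \<ge> v" by (simp add: abs_mult)
      then show ?thesis using split small by linarith
    qed
  qed
  then show ?case by blast
qed

lemma shift_by_large_multiple_separates:
  fixes a r :: "'i \<Rightarrow> int"
  assumes I: "finite I" and "i1 \<in> I" "a i1 \<noteq> 0" "r i1 = 0"
    and r_nonzero: "\<And>i. i \<in> I \<Longrightarrow> i \<noteq> i1 \<Longrightarrow> r i \<noteq> 0"
    and r_distinct: "\<And>i j. i \<in> I \<Longrightarrow> j \<in> I \<Longrightarrow> i \<noteq> j \<Longrightarrow> a i = a j \<Longrightarrow> r i \<noteq> r j"
  obtains q :: int where "\<And>i. i \<in> I \<Longrightarrow> a i * q + r i \<noteq> 0"
    "inj_on (\<lambda>i. a i * q + r i) I"
    "\<And>i. i \<in> I \<Longrightarrow> i \<noteq> i1 \<Longrightarrow> \<not> a i1 * q dvd a i * q + r i"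
proof -
  define R where "R = (\<Sum>i\<in>I. \<bar>r i\<bar>)"
  define q where "q = 2 * R + 1"
  have bound: "\<bar>r i\<bar> \<le> R" if "i \<in> I" for i
    unfolding R_def using I that by (intro member_le_sum) auto
  have small: "\<bar>r i - r j\<bar> < q" if "i \<in> I" "j \<in> I" for i j
    using bound[OF that(1)] bound[OF that(2)] unfolding q_def by arith
  \<comment> \<open>q exceeds every difference of the r i, so it divides such a difference only if it vanishes.\<close>
  have ndvd: "\<not> q dvd r j - r i" if "i \<in> I" "j \<in> I" "r i \<noteq> r j" for i j
    using dvd_imp_le_int[of "r j - r i" q] small[OF that(2,1)] that(3) by auto
  have "q > 0" using bound[OF \<open>i1 \<in> I\<close>] by (simp add: q_def)
  have not_dvd: "\<not> a i1 * q dvd a i * q + r i" if "i \<in> I" "i \<noteq> i1" for i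
  proof
    assume "a i1 * q dvd a i * q + r i"
    then have "q dvd a i * q + r i" by (rule dvd_mult_right)
    then have "q dvd r i - r i1" using \<open>r i1 = 0\<close> by (simp add: dvd_add_right_iff)
    then show False using ndvd[OF \<open>i1 \<in> I\<close> that(1)] r_nonzero[OF that] \<open>r i1 = 0\<close> by auto
  qed
  show thesis
  proof (rule that)
    fix i assume "i \<in> I"
    show "a i * q + r i \<noteq> 0"
    proof (cases "i = i1")
      case True
      then show ?thesis using \<open>a i1 \<noteq> 0\<close> \<open>q > 0\<close> \<open>r i1 = 0\<close> by simp
    next
      case False
      then show ?thesis using not_dvd[OF \<open>i \<in> I\<close>] by auto
    qed
  next
    show "inj_on (\<lambda>i. a i * q + r i) I"
    proof (rule inj_onI, rule ccontr)
      fix i j assume ij: "i \<in> I" "j \<in> I" "a i * q + r i = a j * q + r j" "i \<noteq> j"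
      have "r i = r j"
      proof (rule ccontr)
        assume "r i \<noteq> r j"
        moreover have "r j - r i = (a i - a j) * q" using ij(3) by (simp add: algebra_simps)
        ultimately show False using ndvd[OF ij(1,2)] by simp
      qed
      moreover have "a i = a j" using ij(3) \<open>r i = r j\<close> \<open>q > 0\<close> by simp
      ultimately show False using r_distinct[OF ij(1,2,4)] by simp
    qed
  qed (rule not_dvd)
qed

lemma exists_int_combinations_nondividing:
  fixes c :: "'i \<Rightarrow> 'a \<Rightarrow> int"
  assumes I: "finite I" and B: "finite B" and "i1 \<in> I" "b1 \<in> B" "P \<noteq> 0"
    and row_i1: "\<And>b. b \<in> B \<Longrightarrow> c i1 b = P * of_bool (b = b1)"
    and rows_nonzero: "\<And>i. i \<in> I \<Longrightarrow> i \<noteq> i1 \<Longrightarrow> \<exists>b\<in>B - {b1}. c i b \<noteq> 0"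
    and rows_distinct: "\<And>i j. i \<in> I \<Longrightarrow> j \<in> I \<Longrightarrow> i \<noteq> j \<Longrightarrow> \<exists>b\<in>B. c i b \<noteq> c j b"
  shows "\<exists>x. (\<forall>i\<in>I. (\<Sum>b\<in>B. c i b * x b) \<noteq> 0) \<and> inj_on (\<lambda>i. \<Sum>b\<in>B. c i b * x b) I \<and>
      (\<forall>i\<in>I. i \<noteq> i1 \<longrightarrow> \<not> (\<Sum>b\<in>B. c i1 b * x b) dvd (\<Sum>b\<in>B. c i b * x b))"
proof -
  define pairs where "pairs = {(i, j) \<in> I \<times> I. i \<noteq> j \<and> c i b1 = c j b1}"
  define F where "F = c ` (I - {i1}) \<union> (\<lambda>(i, j) b. c i b - c j b) ` pairs"
  have "finite pairs"
    unfolding pairs_def by (rule finite_subset[of _ "I \<times> I"]) (use I in auto)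
  then have "finite F" using I by (simp add: F_def)
  moreover have "\<exists>b\<in>B - {b1}. f b \<noteq> 0" if "f \<in> F" for f
    using that rows_nonzero rows_distinct by (fastforce simp: F_def pairs_def)
  ultimately obtain y where y: "\<forall>f\<in>F. (\<Sum>b\<in>B - {b1}. f b * y b) \<noteq> 0"
    using int_point_outside_hyperplanes[of "B - {b1}" F] B by blast
  define r where "r i = (\<Sum>b\<in>B - {b1}. c i b * y b)" for i
  have "r i1 = 0"
    unfolding r_def using row_i1 by (intro sum.neutral) auto
  moreover have "r i \<noteq> 0" if "i \<in> I" "i \<noteq> i1" for i
    using y that by (auto simp: r_def F_def)
  moreover have "r i \<noteq> r j" if "i \<in> I" "j \<in> I" "i \<noteq> j" "c i b1 = c j b1" for i j
  proof -
    have "(\<lambda>b. c i b - c j b) \<in> F"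
      using that unfolding F_def pairs_def by (intro UnI2 image_eqI[of _ _ "(i, j)"]) auto
    from bspec[OF y this] have "(\<Sum>b\<in>B - {b1}. (c i b - c j b) * y b) \<noteq> 0" by simp
    then show ?thesis by (simp add: r_def left_diff_distrib sum_subtractf)
  qed
  moreover have "c i1 b1 \<noteq> 0" using row_i1 \<open>b1 \<in> B\<close> \<open>P \<noteq> 0\<close> by simp
  ultimately obtain q where q: "\<And>i. i \<in> I \<Longrightarrow> c i b1 * q + r i \<noteq> 0"
    "inj_on (\<lambda>i. c i b1 * q + r i) I"
    "\<And>i. i \<in> I \<Longrightarrow> i \<noteq> i1 \<Longrightarrow> \<not> c i1 b1 * q dvd c i b1 * q + r i"
    using shift_by_large_multiple_separates[of I i1 "\<lambda>i. c i b1" r] I \<open>i1 \<in> I\<close> by blast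
  have "(\<Sum>b\<in>B. c i b * (y(b1 := q)) b) = c i b1 * q + r i" for i
  proof -
    have "(\<Sum>b\<in>B - {b1}. c i b * (y(b1 := q)) b) = r i"
      unfolding r_def by (intro sum.cong) auto
    then show ?thesis by (simp add: sum.remove[OF B \<open>b1 \<in> B\<close>])
  qed
  moreover have "c i1 b1 * q = c i1 b1 * q + r i1" using \<open>r i1 = 0\<close> by simp
  ultimately show ?thesis
    using q by (intro exI[of _ "y(b1 := q)"]) simp
qed

section \<open>Approximating the line t \<mapsto> (n i t)\<close>

lemma dist_Z_le: "dist_Z x \<le> \<bar>x - of_int m\<bar>"
  unfolding dist_Z_def by (rule cINF_lower) (auto intro: bdd_belowI2[of _ 0])

lemma sum_abs_mult_le:
  fixes c :: "'a \<Rightarrow> int" and e :: "'a \<Rightarrow> real"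
  assumes "\<And>b. b \<in> B \<Longrightarrow> \<bar>e b\<bar> \<le> \<delta>"
  shows "\<bar>\<Sum>b\<in>B. of_int (c b) * e b\<bar> \<le> (\<Sum>b\<in>B. \<bar>of_int (c b)\<bar>) * \<delta>"
proof -
  have "\<bar>\<Sum>b\<in>B. of_int (c b) * e b\<bar> \<le> (\<Sum>b\<in>B. \<bar>of_int (c b) * e b\<bar>)"
    by (rule sum_abs)
  also have "\<dots> = (\<Sum>b\<in>B. \<bar>of_int (c b)\<bar> * \<bar>e b\<bar>)"
    by (simp add: abs_mult)
  also have "\<dots> \<le> (\<Sum>b\<in>B. \<bar>of_int (c b)\<bar> * \<delta>)"
    using assms by (intro sum_mono mult_left_mono) auto
  finally show ?thesis by (simp add: sum_distrib_right)
qed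

lemma multiples_approx_int_line:
  fixes \<theta> :: "'a \<Rightarrow> real" and f :: "'i \<Rightarrow> real" and c :: "'i \<Rightarrow> 'a \<Rightarrow> int"
  assumes I: "finite I" and B: "finite B" and indep: "lin_indep_Z_1 \<theta> B" and "P > 0"
    and rel: "\<And>i. i \<in> I \<Longrightarrow> of_int P * f i = of_int (c0 i) + (\<Sum>b\<in>B. of_int (c i b) * \<theta> b)"
    and "\<epsilon> > 0"
  shows "\<exists>m::nat. m \<ge> 1 \<and> (\<forall>i\<in>I. dist_Z (real m * f i - of_int (\<Sum>b\<in>B. c i b * x b) * t) < \<epsilon>)"
proof -
  define S where "S = (\<Sum>i\<in>I. \<Sum>b\<in>B. \<bar>real_of_int (c i b)\<bar>)"
  define \<delta> where "\<delta> = \<epsilon> / (1 + S)"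
  have "S \<ge> 0" unfolding S_def by (intro sum_nonneg) auto
  then have "\<delta> > 0" "S * \<delta> < \<epsilon>"
    using \<open>\<epsilon> > 0\<close> by (auto simp: \<delta>_def field_simps)
  obtain m' :: nat where "m' \<ge> 1"
    and "\<And>b. b \<in> B \<Longrightarrow> \<exists>z::int. \<bar>real m' * \<theta> b - of_int z - of_int (x b) * t\<bar> < \<delta>"
    using Kronecker_lin_indep_Z_1_pos[OF B indep \<open>\<delta> > 0\<close>, where \<alpha> = "\<lambda>b. of_int (x b) * t"] by blast
  then have "\<forall>b\<in>B. \<exists>z::int. \<bar>real m' * \<theta> b - of_int z - of_int (x b) * t\<bar> < \<delta>"
    by blast
  then obtain z where z: "\<forall>b\<in>B. \<bar>real m' * \<theta> b - of_int (z b) - of_int (x b) * t\<bar> < \<delta>"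
    by (auto dest: bchoice)
  define e where "e b = real m' * \<theta> b - of_int (z b) - of_int (x b) * t" for b
  define m where "m = nat P * m'"
  show ?thesis
  proof (intro exI[of _ m] conjI ballI)
    show "m \<ge> 1" using \<open>P > 0\<close> \<open>m' \<ge> 1\<close> by (simp add: m_def)
    fix i assume "i \<in> I"
    define w where "w = int m' * c0 i + (\<Sum>b\<in>B. c i b * z b)"
    have "real m * f i = real m' * (of_int P * f i)"
      using \<open>P > 0\<close> by (simp add: m_def)
    then have "real m * f i - of_int (\<Sum>b\<in>B. c i b * x b) * t - of_int w = (\<Sum>b\<in>B. of_int (c i b) * e b)"
      by (simp add: rel[OF \<open>i \<in> I\<close>] w_def e_def algebra_simps sum_distrib_left sum_distrib_right
          sum_subtractf flip: sum.distrib)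
    also have "\<bar>\<dots>\<bar> \<le> (\<Sum>b\<in>B. \<bar>of_int (c i b)\<bar>) * \<delta>"
      using z by (intro sum_abs_mult_le) (auto simp: e_def less_imp_le)
    also have "\<dots> \<le> S * \<delta>"
      unfolding S_def using I \<open>i \<in> I\<close> \<open>\<delta> > 0\<close>
      by (intro mult_right_mono member_le_sum[where f = "\<lambda>i. \<Sum>b\<in>B. \<bar>real_of_int (c i b)\<bar>"]) (auto intro: sum_nonneg)
    finally show "dist_Z (real m * f i - of_int (\<Sum>b\<in>B. c i b * x b) * t) < \<epsilon>"
      using dist_Z_le[of _ w] \<open>S * \<delta> < \<epsilon>\<close> by (meson le_less_trans)
  qed
qed

theorem lemma3p2:
  fixes M k p d i1 :: nat and a :: "nat \<Rightarrow> nat \<Rightarrow> real" and \<theta> :: "nat \<Rightarrow> real"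
  assumes M_pos: "M \<ge> 1"
    and M_16: "\<not> (2::nat)^4 dvd M"
    and M_sq: "\<And>q. prime q \<Longrightarrow> odd q \<Longrightarrow> \<not> q^2 dvd M"
    and k_pos: "k \<ge> 1"
    and d_ge: "d \<ge> 2"
    and p_prime: "prime p" and p_ndvd: "\<not> p dvd M"
    and theta_range: "\<And>i. i \<in> {1..d} \<Longrightarrow> \<theta> i \<in> {0..1/2}"
    and theta_def: "\<And>i. i \<in> {1..d} \<Longrightarrow>
           a i p = 2 * real p powr ((real k - 1) / 2) * cos (2 * pi * \<theta> i)"
    and indep: "\<And>i j. i \<in> {1..d} \<Longrightarrow> j \<in> {1..d} \<Longrightarrow> i \<noteq> j \<Longrightarrow>
           lin_indep_Q_1 (\<theta> i) (\<theta> j)"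
    and i1: "i1 \<in> {1..d}"
  shows "\<exists>n :: nat \<Rightarrow> int.
           (\<forall>i\<in>{1..d}. n i \<noteq> 0) \<and> inj_on n {1..d} \<and>
           (\<forall>i\<in>{1..d}. i \<noteq> i1 \<longrightarrow> \<not> n i1 dvd n i) \<and>
           (\<forall>t::real. \<forall>\<epsilon>>0. \<exists>m::nat. m \<ge> 1 \<and>
              (\<forall>i\<in>{1..d}. dist_Z (real m * \<theta> i - of_int (n i) * t) < \<epsilon>))"
proof -
  \<comment> \<open>Only the hypotheses on \<theta> matter; the data M, k, p, a merely explain where \<theta> comes from.\<close>
  define j :: nat where "j = (if i1 = 1 then 2 else 1)"
  have "j \<in> {1..d}" "j \<noteq> i1" using d_ge by (auto simp: j_def)
  then have "lin_indep_Z_1 \<theta> {i1}"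
    using indep i1 by (blast intro: lin_indep_Z_1_singleton)
  then obtain B where B: "i1 \<in> B" "B \<subseteq> {1..d}" "lin_indep_Z_1 \<theta> B"
    and span: "\<And>i. i \<in> {1..d} \<Longrightarrow> in_Q_span_1 \<theta> B (\<theta> i)"
    using exists_maximal_lin_indep_Z_1[of "{1..d}" "{i1}" \<theta>] i1 by auto
  have "finite B" using B(2) finite_subset by blast
  obtain P c0 c where "P > 0"
    and rel: "\<And>i. i \<in> {1..d} \<Longrightarrow> of_int P * \<theta> i = of_int (c0 i) + (\<Sum>b\<in>B. of_int (c i b) * \<theta> b)"
    using in_Q_span_1_common_denominator[of "{1..d}" \<theta> B \<theta>] span by auto
  have "P \<noteq> 0" using \<open>P > 0\<close> by simp
  have row_i1: "c i1 b = P * of_bool (b = i1)" if "b \<in> B" for b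
    using lin_indep_Z_1_coeffs_of_member(2)[OF B(3) \<open>finite B\<close> \<open>i1 \<in> B\<close> rel[OF i1] that] .
  have rows_nonzero: "\<exists>b\<in>B - {i1}. c i b \<noteq> 0" if "i \<in> {1..d}" "i \<noteq> i1" for i
    using lin_indep_Q_1_relation_coeff_nonzero[OF indep[OF that(1) i1 that(2)] \<open>finite B\<close> \<open>i1 \<in> B\<close> \<open>P \<noteq> 0\<close>
        rel[OF that(1)]] .
  have rows_distinct: "\<exists>b\<in>B. c i b \<noteq> c j b" if "i \<in> {1..d}" "j \<in> {1..d}" "i \<noteq> j" for i j
    using lin_indep_Q_1_relation_coeffs_differ[OF indep[OF that] \<open>P \<noteq> 0\<close> rel[OF that(1)] rel[OF that(2)]] .
  obtain x where x: "\<forall>i\<in>{1..d}. (\<Sum>b\<in>B. c i b * x b) \<noteq> 0"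
    "inj_on (\<lambda>i. \<Sum>b\<in>B. c i b * x b) {1..d}"
    "\<forall>i\<in>{1..d}. i \<noteq> i1 \<longrightarrow> \<not> (\<Sum>b\<in>B. c i1 b * x b) dvd (\<Sum>b\<in>B. c i b * x b)"
    using exists_int_combinations_nondividing[where c = c, OF finite_atLeastAtMost \<open>finite B\<close> i1 \<open>i1 \<in> B\<close>
        \<open>P \<noteq> 0\<close> row_i1 rows_nonzero rows_distinct] by blast
  have approx: "\<forall>t::real. \<forall>\<epsilon>>0. \<exists>m::nat. m \<ge> 1 \<and>
      (\<forall>i\<in>{1..d}. dist_Z (real m * \<theta> i - of_int (\<Sum>b\<in>B. c i b * x b) * t) < \<epsilon>)"
    using multiples_approx_int_line[where I = "{1..d}" and f = \<theta>,
          OF finite_atLeastAtMost \<open>finite B\<close> B(3) \<open>P > 0\<close> rel] by blast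
  show ?thesis
    by (rule exI[of _ "\<lambda>i. \<Sum>b\<in>B. c i b * x b"]) (use x approx in simp)
qed

end
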